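(* Let $\epsilon\ge0$ and $\gamma\in(0,1)$, and let $A$ be an $\epsilon$-Hannan consistent bandit algorithm. Then the modified algorithm $A^*$ is an $(\epsilon+\gamma)$-Hannan consistent algorithm with guaranteed exploration.
   Context: Adversarial bandit: $K$ arms; at each step $t$ an adaptive adversary fixes rewards $x_k(t)\in[0,1]$, the algorithm picks arm $k(t)$ and observes $x_{k(t)}(t)$. Average external regret $r(t)=\frac1t(\max_k\sum_{s\le t}x_k(s)-\sum_{s\le t}x_{k(s)}(s))$. An algorithm is $\epsilon$-Hannan consistent if against every adversary $\limsup_t r(t)\le\epsilon$ almost surely. It has guaranteed exploration if, when both players of a repeated matrix game use it for action selection, every joint action $(i,j)$ is chosen infinitely often almost surely. The modified algorithm $A^*$ (exploration parameter $\gamma$): at each time $s=1,2,\dots$, with probability $\gamma$ it "explores", i.e. chooses an action uniformly at random among the available actions without updating any internal variables of $A$, and with probability $1-\gamma$ it runs one iteration of $A$ (selection and update). *)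

theory Defs
  imports "HOL-Probability.Probability"
begin

record 's bandit_alg =
  alg_init :: 's
  alg_sel :: "'s \<Rightarrow> ('s \<times> nat) pmf"
  alg_upd :: "'s \<Rightarrow> nat \<Rightarrow> real \<Rightarrow> 's pmf"

definition valid_alg :: "nat \<Rightarrow> 's bandit_alg \<Rightarrow> bool" where
  "valid_alg K A \<longleftrightarrow> (\<forall>s s' k. (s', k) \<in> set_pmf (alg_sel A s) \<longrightarrow> k < K)"

definition bandit_algorithm :: "(nat \<Rightarrow> 's bandit_alg) \<Rightarrow> bool" where
  "bandit_algorithm A \<longleftrightarrow> (\<forall>K\<ge>1. valid_alg K (A K))"

text \<open>Adaptive adversary: the reward vector at time t is a function of the
  arms chosen by the algorithm before time t; rewards lie in [0,1].\<close>
definition valid_adv :: "nat \<Rightarrow> (nat list \<Rightarrow> nat \<Rightarrow> real) \<Rightarrow> bool" where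
  "valid_adv K adv \<longleftrightarrow> (\<forall>h k. k < K \<longrightarrow> 0 \<le> adv h k \<and> adv h k \<le> 1)"

definition bandit_step ::
  "'s bandit_alg \<Rightarrow> (nat list \<Rightarrow> nat \<Rightarrow> real) \<Rightarrow> 's \<times> nat list \<Rightarrow> ('s \<times> nat list) pmf" where
  "bandit_step A adv sh =
     bind_pmf (alg_sel A (fst sh)) (\<lambda>(s', k).
       bind_pmf (alg_upd A s' k (adv (snd sh) k)) (\<lambda>s''.
         return_pmf (s'', snd sh @ [k])))"

primrec bandit_run ::
  "'s bandit_alg \<Rightarrow> (nat list \<Rightarrow> nat \<Rightarrow> real) \<Rightarrow> nat \<Rightarrow> ('s \<times> nat list) pmf" where
  "bandit_run A adv 0 = return_pmf (alg_init A, [])"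
| "bandit_run A adv (Suc t) = bind_pmf (bandit_run A adv t) (bandit_step A adv)"

definition avg_regret :: "nat \<Rightarrow> (nat list \<Rightarrow> nat \<Rightarrow> real) \<Rightarrow> (nat \<Rightarrow> nat) \<Rightarrow> nat \<Rightarrow> real" where
  "avg_regret K adv ks t =
     (Max ((\<lambda>k. \<Sum>s<t. adv (map ks [0..<s]) k) ` {..<K})
       - (\<Sum>s<t. adv (map ks [0..<s]) (ks s))) / real t"

definition law_of :: "(nat \<Rightarrow> 'a) measure \<Rightarrow> (nat \<Rightarrow> 'a list pmf) \<Rightarrow> bool" where
  "law_of M P \<longleftrightarrow> prob_space M
     \<and> sets M = sets (PiM UNIV (\<lambda>_::nat. count_space (UNIV :: 'a set)))
     \<and> (\<forall>t. distr M (count_space UNIV) (\<lambda>\<omega>. map \<omega> [0..<t]) = measure_pmf (P t))"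

definition hannan_consistent :: "real \<Rightarrow> (nat \<Rightarrow> 's bandit_alg) \<Rightarrow> bool" where
  "hannan_consistent \<epsilon> A \<longleftrightarrow>
     (\<forall>K adv M. 1 \<le> K \<longrightarrow> valid_adv K adv \<longrightarrow>
        law_of M (\<lambda>t. map_pmf snd (bandit_run (A K) adv t)) \<longrightarrow>
        (AE \<omega> in M. limsup (\<lambda>t. ereal (avg_regret K adv \<omega> t)) \<le> ereal \<epsilon>))"

definition game_step ::
  "'s bandit_alg \<Rightarrow> 's bandit_alg \<Rightarrow> (nat \<Rightarrow> nat \<Rightarrow> real) \<Rightarrow> (nat \<Rightarrow> nat \<Rightarrow> real)
    \<Rightarrow> ('s \<times> 's) \<times> (nat \<times> nat) list \<Rightarrow> (('s \<times> 's) \<times> (nat \<times> nat) list) pmf" where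
  "game_step A1 A2 u1 u2 sh =
     bind_pmf (alg_sel A1 (fst (fst sh))) (\<lambda>(s1', i).
     bind_pmf (alg_sel A2 (snd (fst sh))) (\<lambda>(s2', j).
     bind_pmf (alg_upd A1 s1' i (u1 i j)) (\<lambda>s1''.
     bind_pmf (alg_upd A2 s2' j (u2 i j)) (\<lambda>s2''.
       return_pmf ((s1'', s2''), snd sh @ [(i, j)])))))"

primrec game_run ::
  "'s bandit_alg \<Rightarrow> 's bandit_alg \<Rightarrow> (nat \<Rightarrow> nat \<Rightarrow> real) \<Rightarrow> (nat \<Rightarrow> nat \<Rightarrow> real)
    \<Rightarrow> nat \<Rightarrow> (('s \<times> 's) \<times> (nat \<times> nat) list) pmf" where
  "game_run A1 A2 u1 u2 0 = return_pmf ((alg_init A1, alg_init A2), [])"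
| "game_run A1 A2 u1 u2 (Suc t) = bind_pmf (game_run A1 A2 u1 u2 t) (game_step A1 A2 u1 u2)"

definition guaranteed_exploration :: "(nat \<Rightarrow> 's bandit_alg) \<Rightarrow> bool" where
  "guaranteed_exploration A \<longleftrightarrow>
     (\<forall>K1 K2 u1 u2 M. 1 \<le> K1 \<longrightarrow> 1 \<le> K2 \<longrightarrow>
        (\<forall>i j. i < K1 \<longrightarrow> j < K2 \<longrightarrow> 0 \<le> u1 i j \<and> u1 i j \<le> 1 \<and> 0 \<le> u2 i j \<and> u2 i j \<le> 1) \<longrightarrow>
        law_of M (\<lambda>t. map_pmf snd (game_run (A K1) (A K2) u1 u2 t)) \<longrightarrow>
        (AE \<omega> in M. \<forall>i<K1. \<forall>j<K2. infinite {t. \<omega> t = (i, j)}))"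

text \<open>The flag records
  whether the pending update belongs to an iteration of A.\<close>
definition explore_alg :: "real \<Rightarrow> nat \<Rightarrow> 's bandit_alg \<Rightarrow> ('s \<times> bool) bandit_alg" where
  "explore_alg \<gamma> K A =
     \<lparr> alg_init = (alg_init A, False),
       alg_sel = (\<lambda>(s, b). bind_pmf (bernoulli_pmf \<gamma>) (\<lambda>e.
                   if e then map_pmf (\<lambda>k. ((s, False), k)) (pmf_of_set {..<K})
                   else map_pmf (\<lambda>(s', k). ((s', True), k)) (alg_sel A s))),
       alg_upd = (\<lambda>(s, b) k x. if b then map_pmf (\<lambda>s'. (s', False)) (alg_upd A s k x)
                               else return_pmf (s, False)) \<rparr>"

definition mod_alg :: "real \<Rightarrow> (nat \<Rightarrow> 's bandit_alg) \<Rightarrow> nat \<Rightarrow> ('s \<times> bool) bandit_alg" where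
  "mod_alg \<gamma> A = (\<lambda>K. explore_alg \<gamma> K (A K))"

end

theory Submission
  imports Defs
begin

text \<open>
  Draw the exploration coins of A* and the arms it would pick uniformly in advance, as an i.i.d.
  sequence e. Given e, A* is just A run at the exploiting times of e against the adversary that
  sees the interleaved history, so the law of the arms of A* is a mixture over e of images of laws
  of A. Along every e, t times the regret of A* is at most n times the regret of A after its n
  exploiting steps plus the number of exploring steps; by Hoeffding's inequality and Borel-Cantelli
  the latter is eventually below (gamma + delta) t, which turns epsilon into epsilon + gamma.
  For guaranteed exploration, in every round of the game each joint action (i, j) is played with
  probability at least gamma^2 / (K1 K2), so it is missed in m consecutive rounds with probability
  decaying geometrically in m.
\<close>

section \<open>Laws of processes on the path space\<close>

abbreviation path_space :: "(nat \<Rightarrow> 'a) measure" where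
  "path_space \<equiv> PiM UNIV (\<lambda>_. count_space UNIV)"

lemma space_path_space [simp]: "space path_space = UNIV"
  by (auto simp: space_PiM)

lemma measurable_prefix:
  assumes "{0..<t} \<subseteq> I"
  shows "(\<lambda>\<omega>. map \<omega> [0..<t]) \<in> measurable (PiM I (\<lambda>_. count_space (UNIV::'a::countable set))) (count_space UNIV)"
  using assms
proof (induction t)
  case 0
  then show ?case by simp
next
  case (Suc t)
  have "(\<lambda>\<omega>::nat \<Rightarrow> 'a. (map \<omega> [0..<t], \<omega> t))
      \<in> measurable (PiM I (\<lambda>_. count_space UNIV)) (count_space UNIV \<Otimes>\<^sub>M count_space UNIV)"
    using Suc by (intro measurable_Pair measurable_component_singleton) (auto simp: subset_iff)
  then have "(\<lambda>\<omega>::nat \<Rightarrow> 'a. (map \<omega> [0..<t], \<omega> t))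
      \<in> measurable (PiM I (\<lambda>_. count_space UNIV)) (count_space UNIV)"
    by (simp add: pair_measure_countable)
  then have "(\<lambda>p. fst p @ [snd p]) \<circ> (\<lambda>\<omega>::nat \<Rightarrow> 'a. (map \<omega> [0..<t], \<omega> t))
      \<in> measurable (PiM I (\<lambda>_. count_space UNIV)) (count_space UNIV)"
    by (rule measurable_comp) simp
  moreover have "(\<lambda>p. fst p @ [snd p]) \<circ> (\<lambda>\<omega>::nat \<Rightarrow> 'a. (map \<omega> [0..<t], \<omega> t)) = (\<lambda>\<omega>. map \<omega> [0..<Suc t])"
    by auto
  ultimately show ?case
    by simp
qed

lemma measurable_prefix_comp:
  assumes "{0..<t} \<subseteq> I" "\<And>xs. g xs \<in> space N"
  shows "(\<lambda>\<omega>. g (map \<omega> [0..<t])) \<in> measurable (PiM I (\<lambda>_. count_space (UNIV::'a::countable set))) N"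
  by (rule measurable_compose[OF measurable_prefix[OF assms(1)]]) (use assms(2) in auto)

lemma law_ofD:
  assumes "law_of M P"
  shows "prob_space M" "sets M = sets path_space" "space M = UNIV"
    "distr M (count_space UNIV) (\<lambda>\<omega>. map \<omega> [0..<t]) = measure_pmf (P t)"
  using assms unfolding law_of_def by (auto dest: sets_eq_imp_space_eq)

context
  fixes M :: "(nat \<Rightarrow> 'a::countable) measure" and P :: "nat \<Rightarrow> 'a list pmf"
  assumes law: "law_of M P"
begin

lemma measurable_prefix_law: "(\<lambda>\<omega>. map \<omega> [0..<t]) \<in> measurable M (count_space UNIV)"
  by (subst measurable_cong_sets[OF law_ofD(2)[OF law] refl]) (rule measurable_prefix, simp)

lemma sets_prefix_law: "{\<omega>. map \<omega> [0..<t] \<in> S} \<in> sets M"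
  using measurable_sets[OF measurable_prefix_law, of S t] law_ofD(3)[OF law] by (simp add: vimage_def)

lemma emeasure_prefix_law: "emeasure M {\<omega>. map \<omega> [0..<t] \<in> S} = emeasure (measure_pmf (P t)) S"
proof -
  have "emeasure (measure_pmf (P t)) S = emeasure (distr M (count_space UNIV) (\<lambda>\<omega>. map \<omega> [0..<t])) S"
    using law_ofD(4)[OF law] by simp
  also have "\<dots> = emeasure M ((\<lambda>\<omega>. map \<omega> [0..<t]) -` S \<inter> space M)"
    by (rule emeasure_distr[OF measurable_prefix_law]) simp
  finally show ?thesis using law_ofD(3)[OF law] by (simp add: vimage_def)
qed

lemma AE_prefix_law:
  assumes "\<And>xs. xs \<in> set_pmf (P t) \<Longrightarrow> R xs"
  shows "AE \<omega> in M. R (map \<omega> [0..<t])"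
proof -
  have "AE xs in measure_pmf (P t). R xs"
    using assms by (simp add: AE_measure_pmf_iff)
  then have "AE xs in distr M (count_space UNIV) (\<lambda>\<omega>. map \<omega> [0..<t]). R xs"
    by (subst law_ofD(4)[OF law])
  then show ?thesis
    by (subst (asm) AE_distr_iff[OF measurable_prefix_law]) simp_all
qed

end

lemma law_of_unique:
  assumes "law_of M (P :: nat \<Rightarrow> 'a::countable list pmf)" "law_of M' P"
  shows "M = M'"
proof (rule measure_eqI_PiM_infinite[where I=UNIV and M="\<lambda>_. count_space UNIV"])
  show "sets M = sets (path_space :: (nat \<Rightarrow> 'a) measure)" "sets M' = sets (path_space :: (nat \<Rightarrow> 'a) measure)"
    using law_ofD(2) assms by auto
  show "finite_measure M"
    using law_ofD(1)[OF assms(1)] by (simp add: prob_space_def)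
  fix A :: "nat \<Rightarrow> 'a set" and J :: "nat set"
  assume "finite J"
  then obtain t where "J \<subseteq> {..<t}"
    using finite_nat_bounded by blast
  then have "prod_emb UNIV (\<lambda>_. count_space UNIV) J (Pi\<^sub>E J A) = {\<omega>. map \<omega> [0..<t] \<in> {xs. \<forall>j\<in>J. xs ! j \<in> A j}}"
    by (auto simp: prod_emb_def PiE_iff subset_iff)
  then show "emeasure M (prod_emb UNIV (\<lambda>_. count_space UNIV) J (Pi\<^sub>E J A))
      = emeasure M' (prod_emb UNIV (\<lambda>_. count_space UNIV) J (Pi\<^sub>E J A))"
    by (simp only: emeasure_prefix_law[OF assms(1)] emeasure_prefix_law[OF assms(2)])
qed

text \<open>A projective family of finite-dimensional laws has a law on the path space, built by the
  Ionescu-Tulcea theorem from the conditional law of the next coordinate given the prefix (which is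
  irrelevant, hence undefined, off the support of P n).\<close>

definition next_pmf :: "(nat \<Rightarrow> 'a list pmf) \<Rightarrow> nat \<Rightarrow> 'a list \<Rightarrow> 'a pmf" where
  "next_pmf P n xs = (if xs \<in> set_pmf (P n)
     then map_pmf (\<lambda>ys. ys ! n) (cond_pmf (P (Suc n)) {ys. take n ys = xs})
     else return_pmf undefined)"

definition next_kernel :: "(nat \<Rightarrow> 'a list pmf) \<Rightarrow> nat \<Rightarrow> (nat \<Rightarrow> 'a) \<Rightarrow> 'a measure" where
  "next_kernel P n \<omega> = measure_pmf (next_pmf P n (map \<omega> [0..<n]))"

locale consistent_family =
  fixes P :: "nat \<Rightarrow> 'a::countable list pmf"
  assumes length_P: "\<And>t xs. xs \<in> set_pmf (P t) \<Longrightarrow> length xs = t"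
    and take_P: "\<And>t. map_pmf (take t) (P (Suc t)) = P t"
begin

lemma set_pmf_P: "set_pmf (P n) = take n ` set_pmf (P (Suc n))"
  by (metis take_P set_map_pmf)

lemma bind_next_pmf: "bind_pmf (P n) (\<lambda>xs. map_pmf (\<lambda>x. xs @ [x]) (next_pmf P n xs)) = P (Suc n)"
proof -
  have fibre_ne: "set_pmf (P (Suc n)) \<inter> {ys. take n ys = xs} \<noteq> {}" if "xs \<in> set_pmf (P n)" for xs
    using that set_pmf_P[of n] by auto
  have "map_pmf (\<lambda>x. xs @ [x]) (next_pmf P n xs) = cond_pmf (P (Suc n)) {ys. take n ys = xs}"
    if xs: "xs \<in> set_pmf (P n)" for xs
  proof -
    have "map_pmf (\<lambda>x. xs @ [x]) (next_pmf P n xs)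
        = map_pmf (\<lambda>ys. xs @ [ys ! n]) (cond_pmf (P (Suc n)) {ys. take n ys = xs})"
      using xs by (simp add: next_pmf_def map_pmf_comp)
    also have "\<dots> = map_pmf id (cond_pmf (P (Suc n)) {ys. take n ys = xs})"
    proof (rule map_pmf_cong[OF refl])
      fix ys assume "ys \<in> set_pmf (cond_pmf (P (Suc n)) {ys. take n ys = xs})"
      then have "take n ys = xs" "length ys = Suc n"
        using fibre_ne[OF xs] length_P by (auto simp: set_cond_pmf)
      moreover have "take (Suc n) ys = take n ys @ [ys ! n]"
        using \<open>length ys = Suc n\<close> by (intro take_Suc_conv_app_nth) simp
      ultimately show "xs @ [ys ! n] = id ys"
        by simp
    qed
    finally show ?thesis by simp
  qed
  then have "bind_pmf (P n) (\<lambda>xs. map_pmf (\<lambda>x. xs @ [x]) (next_pmf P n xs))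
      = bind_pmf (P n) (\<lambda>xs. cond_pmf (P (Suc n)) {ys. take n ys = xs})"
    by (intro bind_pmf_cong) auto
  also have "\<dots> = P (Suc n)"
  proof (rule bind_cond_pmf_cancel)
    show "\<And>x. x \<in> set_pmf (P n) \<Longrightarrow> set_pmf (P (Suc n)) \<inter> {y. take n y = x} \<noteq> {}"
      using fibre_ne by blast
    show "\<And>y. y \<in> set_pmf (P (Suc n)) \<Longrightarrow> set_pmf (P n) \<inter> {x. take n y = x} \<noteq> {}"
      using set_pmf_P[of n] by auto
    fix x y :: "'a list" assume "take n y = x"
    then show "measure_pmf.prob (P (Suc n)) {y. take n y = x} = measure_pmf.prob (P n) {x'. take n y = x'}"
      using take_P[of n, symmetric] by (simp add: measure_map_pmf vimage_def eq_commute)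
  qed
  finally show ?thesis .
qed

sublocale IT: Ionescu_Tulcea "next_kernel P" "\<lambda>_. count_space UNIV"
proof (rule Ionescu_Tulcea.intro)
  show "next_kernel P i \<in> measurable (PiM {0..<i} (\<lambda>_. count_space UNIV)) (subprob_algebra (count_space UNIV))" for i
    unfolding next_kernel_def
    by (rule measurable_prefix_comp[OF order_refl]) (rule measure_pmf_in_subprob_algebra)
  fix i x
  show "prob_space (next_kernel P i x)"
    unfolding next_kernel_def by (rule measure_pmf.prob_space_axioms)
qed

lemma distr_eP_prefix:
  assumes "x \<in> space (PiM {0..<t} (\<lambda>_. count_space UNIV))"
  shows "distr (IT.eP t x) (count_space UNIV) (\<lambda>\<omega>. map \<omega> [0..<Suc t])
    = measure_pmf (map_pmf (\<lambda>y. map x [0..<t] @ [y]) (next_pmf P t (map x [0..<t])))"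
proof -
  have sets_kernel: "sets (next_kernel P t x) = sets (count_space UNIV)"
    by (simp add: next_kernel_def)
  have "fun_upd x t \<in> measurable (next_kernel P t x) (PiM {0..<Suc t} (\<lambda>_. count_space UNIV))"
    unfolding measurable_cong_sets[OF sets_kernel refl] measurable_count_space_eq1
    using assms by (auto simp: space_PiM PiE_iff extensional_def)
  then have "distr (IT.eP t x) (count_space UNIV) (\<lambda>\<omega>. map \<omega> [0..<Suc t])
      = distr (next_kernel P t x) (count_space UNIV) ((\<lambda>\<omega>. map \<omega> [0..<Suc t]) \<circ> fun_upd x t)"
    unfolding IT.eP_def by (rule distr_distr[OF measurable_prefix[OF order_refl]])
  also have "(\<lambda>\<omega>. map \<omega> [0..<Suc t]) \<circ> fun_upd x t = (\<lambda>y. map x [0..<t] @ [y])"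
    by (auto simp: fun_eq_iff)
  finally show ?thesis
    by (simp add: next_kernel_def[of P t x] map_pmf_rep_eq)
qed

abbreviation C0 :: "nat \<Rightarrow> (nat \<Rightarrow> 'a) measure" where
  "C0 t \<equiv> IT.C 0 t (\<lambda>_. undefined)"

lemma distr_C0_prefix: "distr (C0 t) (count_space UNIV) (\<lambda>\<omega>. map \<omega> [0..<t]) = measure_pmf (P t)"
proof (induction t)
  case 0
  have "P 0 = return_pmf []"
    using length_P[of _ 0] by (subst set_pmf_subset_singleton[symmetric]) auto
  then show ?case by (simp add: distr_return return_pmf.rep_eq)
next
  case (Suc t)
  have u: "(\<lambda>_. undefined) \<in> space (PiM {0..<0::nat} (\<lambda>_. count_space (UNIV :: 'a set)))"
    by (simp add: space_PiM)
  have sets_C0: "sets (C0 t) = sets (PiM {0..<t} (\<lambda>_. count_space UNIV))"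
    using IT.sets_C[OF u, of t] by simp
  have ne: "space (C0 t) \<noteq> {}"
    using prob_space.not_empty[OF IT.prob_space_C[OF u, of t]] .
  define g where "g xs = measure_pmf (map_pmf (\<lambda>y. xs @ [y]) (next_pmf P t xs))" for xs
  have g: "g \<in> measurable (count_space UNIV) (subprob_algebra (count_space UNIV))"
    by (simp add: g_def measure_pmf_in_subprob_algebra)
  have eP: "IT.eP t \<in> measurable (C0 t) (subprob_algebra (PiM {0..<Suc t} (\<lambda>_. count_space UNIV)))"
    by (subst measurable_cong_sets[OF sets_C0 refl]) (rule IT.measurable_eP)
  have "distr (C0 (Suc t)) (count_space UNIV) (\<lambda>\<omega>. map \<omega> [0..<Suc t])
      = distr (C0 t \<bind> IT.eP t) (count_space UNIV) (\<lambda>\<omega>. map \<omega> [0..<Suc t])"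
    by simp
  also have "\<dots> = C0 t \<bind> (\<lambda>x. distr (IT.eP t x) (count_space UNIV) (\<lambda>\<omega>. map \<omega> [0..<Suc t]))"
    by (rule distr_bind[OF eP ne measurable_prefix[OF order_refl]])
  also have "\<dots> = C0 t \<bind> (\<lambda>x. g (map x [0..<t]))"
    using sets_eq_imp_space_eq[OF sets_C0] by (intro bind_cong refl) (simp add: g_def distr_eP_prefix del: upt_Suc)
  also have "\<dots> = distr (C0 t) (count_space UNIV) (\<lambda>\<omega>. map \<omega> [0..<t]) \<bind> g"
    by (rule bind_distr[symmetric, OF _ g ne])
       (simp add: measurable_cong_sets[OF sets_C0 refl] measurable_prefix)
  also have "\<dots> = measure_pmf (bind_pmf (P t) (\<lambda>xs. map_pmf (\<lambda>y. xs @ [y]) (next_pmf P t xs)))"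
    by (simp add: Suc g_def[abs_def] measure_pmf_bind)
  finally show ?case
    by (simp only: bind_next_pmf)
qed

lemma distr_lim_prefix: "distr IT.PF.lim (count_space UNIV) (\<lambda>\<omega>. map \<omega> [0..<t]) = measure_pmf (P t)"
proof -
  let ?r = "\<lambda>x. restrict x {0..<t}"
  have prefix_restrict: "(\<lambda>\<omega>. map \<omega> [0..<t]) \<circ> ?r = (\<lambda>\<omega>. map \<omega> [0..<t])"
    by (auto simp: fun_eq_iff)
  have "IT.up_to {0..<t} = t"
    unfolding IT.up_to_def by (rule Least_equality) auto
  then have "distr (C0 t) (count_space UNIV) (\<lambda>\<omega>. map \<omega> [0..<t])
      = distr (IT.CI {0..<t}) (count_space UNIV) (\<lambda>\<omega>. map \<omega> [0..<t])"
    unfolding IT.CI_def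
    by (subst distr_distr[OF measurable_prefix[OF order_refl]])
       (simp_all add: prefix_restrict measurable_cong_sets[OF IT.sets_C refl] space_PiM
          measurable_restrict_subset)
  also have "\<dots> = distr (distr IT.PF.lim (PiM {0..<t} (\<lambda>_. count_space UNIV)) ?r)
      (count_space UNIV) (\<lambda>\<omega>. map \<omega> [0..<t])"
    by (simp only: IT.distr_lim finite_atLeastLessThan)
  also have "\<dots> = distr IT.PF.lim (count_space UNIV) (\<lambda>\<omega>. map \<omega> [0..<t])"
    by (subst distr_distr[OF measurable_prefix[OF order_refl]])
       (simp_all add: prefix_restrict measurable_cong_sets[OF IT.PF.sets_lim refl] measurable_restrict_subset)
  finally show ?thesis
    using distr_C0_prefix by simp
qed

lemma law_of_lim: "law_of IT.PF.lim P"
proof -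
  have "emeasure IT.PF.lim (space IT.PF.lim) = 1"
    using arg_cong[OF distr_lim_prefix[of 0], of "\<lambda>M. emeasure M UNIV"]
    by (subst (asm) emeasure_distr)
       (simp_all add: measurable_cong_sets[OF IT.PF.sets_lim refl] measurable_prefix
         measure_pmf.emeasure_space_1[simplified])
  then show ?thesis
    unfolding law_of_def by (auto intro: prob_spaceI distr_lim_prefix)
qed

end

lemma law_of_exists: "consistent_family P \<Longrightarrow> \<exists>M. law_of M P"
  using consistent_family.law_of_lim by blast

lemma set_pmf_bandit_step:
  "x \<in> set_pmf (bandit_step A adv sh) \<Longrightarrow> \<exists>s' k. (s', k) \<in> set_pmf (alg_sel A (fst sh)) \<and> snd x = snd sh @ [k]"
  by (force simp: bandit_step_def split: prod.splits)

lemma length_bandit_run: "x \<in> set_pmf (bandit_run A adv t) \<Longrightarrow> length (snd x) = t"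
  by (induction t arbitrary: x) (auto dest!: set_pmf_bandit_step)

lemma bandit_run_arms:
  assumes "valid_alg K A"
  shows "x \<in> set_pmf (bandit_run A adv t) \<Longrightarrow> k \<in> set (snd x) \<Longrightarrow> k < K"
proof (induction t arbitrary: x)
  case 0
  then show ?case by simp
next
  case (Suc t)
  then obtain sh where sh: "sh \<in> set_pmf (bandit_run A adv t)" "x \<in> set_pmf (bandit_step A adv sh)"
    by auto
  then obtain s' k' where "(s', k') \<in> set_pmf (alg_sel A (fst sh))" "snd x = snd sh @ [k']"
    by (blast dest: set_pmf_bandit_step)
  with assms Suc.IH[OF sh(1)] Suc.prems(2) show ?case
    unfolding valid_alg_def by auto
qed

lemma bandit_run_cong:
  assumes "\<And>h. length h < t \<Longrightarrow> adv h = adv' h"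
  shows "bandit_run A adv t = bandit_run A adv' t"
  using assms
proof (induction t)
  case 0
  then show ?case by simp
next
  case (Suc t)
  have "bandit_step A adv sh = bandit_step A adv' sh" if "sh \<in> set_pmf (bandit_run A adv' t)" for sh
    using Suc.prems length_bandit_run[OF that] by (simp add: bandit_step_def)
  with Suc show ?case
    by (simp cong: bind_pmf_cong)
qed

lemma consistent_family_bandit_run: "consistent_family (\<lambda>t. map_pmf snd (bandit_run A adv t))"
proof
  show "\<And>t xs. xs \<in> set_pmf (map_pmf snd (bandit_run A adv t)) \<Longrightarrow> length xs = t"
    using length_bandit_run by auto
  fix t
  have "map_pmf (take t \<circ> snd) (bandit_step A adv sh) = return_pmf (snd sh)"
    if "sh \<in> set_pmf (bandit_run A adv t)" for sh
  proof -
    have "map_pmf (take t \<circ> snd) (bandit_step A adv sh) = map_pmf (\<lambda>_. snd sh) (bandit_step A adv sh)"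
      using length_bandit_run[OF that] by (intro map_pmf_cong) (auto dest!: set_pmf_bandit_step)
    then show ?thesis by simp
  qed
  then have "map_pmf (take t) (map_pmf snd (bandit_run A adv (Suc t)))
      = bind_pmf (bandit_run A adv t) (\<lambda>sh. return_pmf (snd sh))"
    by (simp add: map_pmf_comp map_bind_pmf comp_def cong: bind_pmf_cong)
  then show "map_pmf (take t) (map_pmf snd (bandit_run A adv (Suc t))) = map_pmf snd (bandit_run A adv t)"
    by (simp add: map_pmf_def)
qed

text \<open>An exploration sequence e records at every time s whether A* explores (fst (e s)) and
  the arm it would draw uniformly if it does (snd (e s)).\<close>

definition n_exploit :: "(nat \<Rightarrow> bool \<times> nat) \<Rightarrow> nat \<Rightarrow> nat" where
  "n_exploit e t = card {s. s < t \<and> \<not> fst (e s)}"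

definition n_explore :: "(nat \<Rightarrow> bool \<times> nat) \<Rightarrow> nat \<Rightarrow> nat" where
  "n_explore e t = card {s. s < t \<and> fst (e s)}"

definition exploit_time :: "(nat \<Rightarrow> bool \<times> nat) \<Rightarrow> nat \<Rightarrow> nat" where
  "exploit_time e m = (LEAST s. \<not> fst (e s) \<and> n_exploit e s = m)"

definition interleave :: "(nat \<Rightarrow> bool \<times> nat) \<Rightarrow> (nat \<Rightarrow> nat) \<Rightarrow> nat \<Rightarrow> nat" where
  "interleave e \<omega> s = (if fst (e s) then snd (e s) else \<omega> (n_exploit e s))"

text \<open>The adversary met by A inside A*: its m-th move is made at time exploit_time e m, after the
  interleaved history.\<close>

definition exploit_adv :: "(nat list \<Rightarrow> nat \<Rightarrow> real) \<Rightarrow> (nat \<Rightarrow> bool \<times> nat) \<Rightarrow> nat list \<Rightarrow> nat \<Rightarrow> real" where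
  "exploit_adv adv e h = adv (map (interleave e (nth h)) [0..<exploit_time e (length h)])"

lemma n_exploit_0 [simp]: "n_exploit e 0 = 0"
  by (simp add: n_exploit_def)

lemma n_explore_0 [simp]: "n_explore e 0 = 0"
  by (simp add: n_explore_def)

lemma n_exploit_Suc: "n_exploit e (Suc t) = n_exploit e t + (if fst (e t) then 0 else 1)"
proof -
  have "{s. s < Suc t \<and> \<not> fst (e s)} = {s. s < t \<and> \<not> fst (e s)} \<union> (if fst (e t) then {} else {t})"
    by (auto simp: less_Suc_eq)
  then show ?thesis by (simp add: n_exploit_def)
qed

lemma n_explore_Suc: "n_explore e (Suc t) = n_explore e t + (if fst (e t) then 1 else 0)"
proof -
  have "{s. s < Suc t \<and> fst (e s)} = {s. s < t \<and> fst (e s)} \<union> (if fst (e t) then {t} else {})"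
    by (auto simp: less_Suc_eq)
  then show ?thesis by (simp add: n_explore_def)
qed

lemma n_exploit_add_n_explore: "n_exploit e t + n_explore e t = t"
  by (induction t) (auto simp: n_exploit_Suc n_explore_Suc)

lemma n_exploit_mono: "s \<le> s' \<Longrightarrow> n_exploit e s \<le> n_exploit e s'"
  unfolding n_exploit_def by (intro card_mono) auto

lemma n_exploit_strict_mono: "s < s' \<Longrightarrow> \<not> fst (e s) \<Longrightarrow> n_exploit e s < n_exploit e s'"
  using n_exploit_mono[of "Suc s" s' e] by (simp add: n_exploit_Suc)

lemma n_exploit_cong: "(\<And>s. s < t \<Longrightarrow> e s = e' s) \<Longrightarrow> n_exploit e t = n_exploit e' t"
  unfolding n_exploit_def by (rule arg_cong[where f=card]) auto

lemma exploit_time_eqI: "\<not> fst (e s) \<Longrightarrow> exploit_time e (n_exploit e s) = s"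
  unfolding exploit_time_def
proof (rule Least_equality)
  fix s' assume "\<not> fst (e s') \<and> n_exploit e s' = n_exploit e s"
  then show "s \<le> s'"
    using n_exploit_strict_mono[of s' s e] by (cases "s \<le> s'") auto
qed simp

lemma exploit_time_exists: "m < n_exploit e t \<Longrightarrow> \<exists>s<t. \<not> fst (e s) \<and> n_exploit e s = m"
proof (induction t)
  case 0
  then show ?case by simp
next
  case (Suc t)
  then show ?case
    by (cases "m < n_exploit e t") (auto simp: n_exploit_Suc less_Suc_eq split: if_splits)
qed

lemma interleave_cong_seq:
  assumes "\<And>j. j < t \<Longrightarrow> e j = e' j" "s < t"
  shows "interleave e \<omega> s = interleave e' \<omega> s"
  using assms n_exploit_cong[of s e e'] by (simp add: interleave_def)

lemma interleave_cong_path: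
  assumes "\<And>m. m < n_exploit e t \<Longrightarrow> \<omega> m = \<omega>' m" "s < t"
  shows "interleave e \<omega> s = interleave e \<omega>' s"
  using assms n_exploit_strict_mono[of s t e] by (simp add: interleave_def)

lemma exploit_adv_cong_seq:
  assumes "\<And>j. j < t \<Longrightarrow> e j = e' j" "length h < n_exploit e t"
  shows "exploit_adv adv e h = exploit_adv adv e' h"
proof -
  obtain s where s: "s < t" "\<not> fst (e s)" "n_exploit e s = length h"
    using exploit_time_exists assms(2) by blast
  have time: "exploit_time e (length h) = s" "exploit_time e' (length h) = s"
    using s exploit_time_eqI[of e s] exploit_time_eqI[of e' s] assms(1) n_exploit_cong[of s e e']
    by auto
  have prefix: "map (interleave e (nth h)) [0..<s] = map (interleave e' (nth h)) [0..<s]"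
    using s assms(1) by (intro map_cong refl interleave_cong_seq[where t=s]) auto
  show ?thesis
    unfolding exploit_adv_def by (simp only: time prefix)
qed

lemma exploit_adv_at_exploit_time:
  assumes "\<not> fst (e t)"
  shows "exploit_adv adv e (map \<omega> [0..<n_exploit e t]) = adv (map (interleave e \<omega>) [0..<t])"
proof -
  have prefix: "map (interleave e (nth (map \<omega> [0..<n_exploit e t]))) [0..<t] = map (interleave e \<omega>) [0..<t]"
    by (intro map_cong refl interleave_cong_path[where t=t]) auto
  show ?thesis
    unfolding exploit_adv_def by (simp only: length_map length_upt diff_zero exploit_time_eqI[of e t, OF assms] prefix)
qed

definition seq_of_list :: "(bool \<times> nat) list \<Rightarrow> nat \<Rightarrow> bool \<times> nat" where
  "seq_of_list es s = (if s < length es then es ! s else (False, 0))"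

definition n_exploit_list :: "(bool \<times> nat) list \<Rightarrow> nat" where
  "n_exploit_list es = length (filter (\<lambda>p. \<not> fst p) es)"

definition interleave_list :: "(bool \<times> nat) list \<Rightarrow> nat list \<Rightarrow> nat list" where
  "interleave_list es h = map (interleave (seq_of_list es) (nth h)) [0..<length es]"

lemma seq_of_list_map: "j < t \<Longrightarrow> seq_of_list (map e [0..<t]) j = e j"
  by (simp add: seq_of_list_def)

lemma seq_of_list_append: "j < length es \<Longrightarrow> seq_of_list (es @ p) j = seq_of_list es j"
  by (simp add: seq_of_list_def nth_append)

lemma n_exploit_seq_of_list: "n_exploit (seq_of_list es) (length es) = n_exploit_list es"
proof -
  have "n_exploit (seq_of_list es) s = n_exploit_list (take s es)" if "s \<le> length es" for s
    using that
    by (induction s) (simp_all add: n_exploit_list_def n_exploit_Suc take_Suc_conv_app_nth seq_of_list_def)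
  then show ?thesis by simp
qed

lemma n_exploit_list_map: "n_exploit_list (map e [0..<t]) = n_exploit e t"
  using n_exploit_seq_of_list[of "map e [0..<t]"] n_exploit_cong[of t "seq_of_list (map e [0..<t])" e]
  by (simp add: seq_of_list_map)

lemma n_exploit_list_snoc: "n_exploit_list (es @ [(b, x)]) = n_exploit_list es + (if b then 0 else 1)"
  by (simp add: n_exploit_list_def)

lemma interleave_list_snoc:
  "interleave_list (es @ [(b, x)]) h = interleave_list es h @ [if b then x else h ! n_exploit_list es]"
proof -
  have "map (interleave (seq_of_list (es @ [(b, x)])) (nth h)) [0..<length es] = interleave_list es h"
    unfolding interleave_list_def
    by (intro map_cong refl interleave_cong_seq[where t="length es"]) (auto simp: seq_of_list_append)
  moreover have "n_exploit (seq_of_list (es @ [(b, x)])) (length es) = n_exploit_list es"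
    using n_exploit_cong[of "length es" "seq_of_list (es @ [(b, x)])" "seq_of_list es"]
    by (simp add: seq_of_list_append n_exploit_seq_of_list)
  ultimately show ?thesis
    by (cases b) (simp_all add: interleave_list_def interleave_def seq_of_list_def)
qed

lemma interleave_list_append_path:
  "length h = n_exploit_list es \<Longrightarrow> interleave_list es (h @ ys) = interleave_list es h"
  unfolding interleave_list_def
  by (intro map_cong refl interleave_cong_path[where t="length es"])
     (auto simp: n_exploit_seq_of_list nth_append)

lemma map_interleave:
  "map (interleave e \<omega>) [0..<t] = interleave_list (map e [0..<t]) (map \<omega> [0..<n_exploit e t])"
proof -
  have "interleave e \<omega> s = interleave (seq_of_list (map e [0..<t])) (nth (map \<omega> [0..<n_exploit e t])) s"
    if "s < t" for s
    using that interleave_cong_seq[of t e "seq_of_list (map e [0..<t])" s]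
      interleave_cong_path[of e t \<omega> "nth (map \<omega> [0..<n_exploit e t])" s]
    by (simp add: seq_of_list_map)
  then show ?thesis
    by (simp add: interleave_list_def)
qed

lemma exploit_adv_snoc:
  "length h < n_exploit_list es \<Longrightarrow> exploit_adv adv (seq_of_list (es @ p)) h = exploit_adv adv (seq_of_list es) h"
  by (rule sym, rule exploit_adv_cong_seq[where t="length es"])
     (simp_all add: seq_of_list_append n_exploit_seq_of_list)

lemma exploit_adv_snoc_exploit:
  assumes "length h = n_exploit_list es"
  shows "exploit_adv adv (seq_of_list (es @ [(False, x)])) h = adv (interleave_list es h)"
proof -
  let ?e = "seq_of_list (es @ [(False, x)])"
  have "n_exploit ?e (length es) = n_exploit_list es"
    using n_exploit_cong[of "length es" ?e "seq_of_list es"]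
    by (simp add: seq_of_list_append n_exploit_seq_of_list)
  moreover have "map (interleave ?e (nth h)) [0..<length es] = interleave_list es h"
    unfolding interleave_list_def
    by (intro map_cong refl interleave_cong_seq[where t="length es"]) (auto simp: seq_of_list_append)
  moreover have "\<not> fst (?e (length es))"
    by (simp add: seq_of_list_def)
  moreover have "map (nth h) [0..<n_exploit_list es] = h"
    by (simp add: assms[symmetric] map_nth)
  ultimately show ?thesis
    using exploit_adv_at_exploit_time[of ?e "length es" adv "nth h"] by simp
qed

section \<open>Coupling A* with A\<close>

definition explore_pmf :: "real \<Rightarrow> nat \<Rightarrow> (bool \<times> nat) pmf" where
  "explore_pmf \<gamma> K = pair_pmf (bernoulli_pmf \<gamma>) (pmf_of_set {..<K})"

lemma replicate_pmf_Suc_snoc: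
  "replicate_pmf (Suc n) p = bind_pmf (replicate_pmf n p) (\<lambda>xs. map_pmf (\<lambda>x. xs @ [x]) p)"
proof -
  have "replicate_pmf (Suc 0) p = map_pmf (\<lambda>x. [x]) p"
    by (simp add: map_pmf_def bind_return_pmf)
  with replicate_pmf_distrib[of n 1 p] show ?thesis
    by (simp add: bind_map_pmf map_pmf_def bind_assoc_pmf bind_return_pmf del: replicate_pmf.simps)
qed

lemma consistent_family_replicate_pmf: "consistent_family (\<lambda>t. replicate_pmf t (p :: 'a::countable pmf))"
proof
  show "\<And>t xs. xs \<in> set_pmf (replicate_pmf t p) \<Longrightarrow> length xs = t"
    by (simp add: set_replicate_pmf)
  fix t
  have "map_pmf (take t) (replicate_pmf (Suc t) p)
      = bind_pmf (replicate_pmf t p) (\<lambda>xs. map_pmf (\<lambda>x. take t (xs @ [x])) p)"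
    by (simp add: replicate_pmf_Suc_snoc map_bind_pmf map_pmf_comp del: replicate_pmf.simps)
  also have "\<dots> = bind_pmf (replicate_pmf t p) return_pmf"
    by (intro bind_pmf_cong refl) (simp add: set_replicate_pmf)
  finally show "map_pmf (take t) (replicate_pmf (Suc t) p) = replicate_pmf t p"
    by (simp add: bind_return_pmf')
qed

definition exploit_run ::
  "'s bandit_alg \<Rightarrow> (nat list \<Rightarrow> nat \<Rightarrow> real) \<Rightarrow> (bool \<times> nat) list \<Rightarrow> ('s \<times> nat list) pmf" where
  "exploit_run B adv es = bandit_run B (exploit_adv adv (seq_of_list es)) (n_exploit_list es)"

definition lift_state :: "(bool \<times> nat) list \<Rightarrow> 's \<times> nat list \<Rightarrow> ('s \<times> bool) \<times> nat list" where
  "lift_state es sh = ((fst sh, False), interleave_list es (snd sh))"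

lemma bandit_run_exploit_adv_snoc:
  "bandit_run B (exploit_adv adv (seq_of_list (es @ [p]))) (n_exploit_list es) = exploit_run B adv es"
  unfolding exploit_run_def by (rule bandit_run_cong) (rule exploit_adv_snoc)

lemma bandit_step_explore_alg:
  "bandit_step (explore_alg \<gamma> K B) adv ((s, False), H) =
   bind_pmf (bernoulli_pmf \<gamma>) (\<lambda>b. if b then map_pmf (\<lambda>k. ((s, False), H @ [k])) (pmf_of_set {..<K})
      else bind_pmf (alg_sel B s) (\<lambda>(s', k). map_pmf (\<lambda>s''. ((s'', False), H @ [k])) (alg_upd B s' k (adv H k))))"
  unfolding bandit_step_def explore_alg_def
  by (auto simp: bind_assoc_pmf bind_map_pmf bind_return_pmf map_pmf_def intro!: bind_pmf_cong split: prod.splits)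

lemma explore_step_coupling:
  "bind_pmf (exploit_run B adv es) (\<lambda>sh. map_pmf (\<lambda>k. ((fst sh, False), interleave_list es (snd sh) @ [k])) U)
   = bind_pmf U (\<lambda>k. map_pmf (lift_state (es @ [(True, k)])) (exploit_run B adv (es @ [(True, k)])))"
proof -
  have "exploit_run B adv (es @ [(True, k)]) = exploit_run B adv es" for k
    using bandit_run_exploit_adv_snoc[of B adv es "(True, k)"]
    by (simp add: exploit_run_def n_exploit_list_snoc)
  then have "bind_pmf U (\<lambda>k. map_pmf (lift_state (es @ [(True, k)])) (exploit_run B adv (es @ [(True, k)])))
      = bind_pmf U (\<lambda>k. bind_pmf (exploit_run B adv es)
          (\<lambda>sh. return_pmf ((fst sh, False), interleave_list es (snd sh) @ [k])))"
    by (simp add: lift_state_def interleave_list_snoc map_pmf_def)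
  also have "\<dots> = bind_pmf (exploit_run B adv es)
      (\<lambda>sh. bind_pmf U (\<lambda>k. return_pmf ((fst sh, False), interleave_list es (snd sh) @ [k])))"
    by (rule bind_commute_pmf)
  finally show ?thesis
    by (simp add: map_pmf_def)
qed

lemma exploit_step_coupling:
  "bind_pmf (exploit_run B adv es) (\<lambda>sh. bind_pmf (alg_sel B (fst sh)) (\<lambda>(s', k).
       map_pmf (\<lambda>s''. ((s'', False), interleave_list es (snd sh) @ [k]))
         (alg_upd B s' k (adv (interleave_list es (snd sh)) k))))
   = map_pmf (lift_state (es @ [(False, x)])) (exploit_run B adv (es @ [(False, x)]))"
proof -
  let ?adv = "exploit_adv adv (seq_of_list (es @ [(False, x)]))"
  have "exploit_run B adv (es @ [(False, x)]) = bind_pmf (exploit_run B adv es) (bandit_step B ?adv)"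
    using bandit_run_exploit_adv_snoc[of B adv es "(False, x)"]
    by (simp add: exploit_run_def n_exploit_list_snoc)
  moreover have "map_pmf (lift_state (es @ [(False, x)])) (bandit_step B ?adv sh)
      = bind_pmf (alg_sel B (fst sh)) (\<lambda>(s', k). map_pmf (\<lambda>s''. ((s'', False), interleave_list es (snd sh) @ [k]))
          (alg_upd B s' k (adv (interleave_list es (snd sh)) k)))"
    if "sh \<in> set_pmf (exploit_run B adv es)" for sh
  proof -
    have len: "length (snd sh) = n_exploit_list es"
      using that length_bandit_run unfolding exploit_run_def by blast
    have "interleave_list (es @ [(False, x)]) (snd sh @ [k]) = interleave_list es (snd sh) @ [k]" for k
      using len by (simp add: interleave_list_snoc interleave_list_append_path nth_append)
    then show ?thesis
      unfolding bandit_step_def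
      by (auto simp: map_bind_pmf exploit_adv_snoc_exploit[OF len] lift_state_def map_pmf_comp split_beta
          map_pmf_def bind_assoc_pmf bind_return_pmf intro!: bind_pmf_cong)
  qed
  ultimately show ?thesis
    by (simp add: map_bind_pmf cong: bind_pmf_cong)
qed

lemma bandit_step_coupling:
  "bind_pmf (exploit_run B adv es) (\<lambda>sh. bandit_step (explore_alg \<gamma> K B) adv (lift_state es sh))
   = bind_pmf (explore_pmf \<gamma> K) (\<lambda>x. map_pmf (lift_state (es @ [x])) (exploit_run B adv (es @ [x])))"
proof -
  let ?U = "pmf_of_set {..<K}"
  have "bind_pmf (exploit_run B adv es) (\<lambda>sh. bandit_step (explore_alg \<gamma> K B) adv (lift_state es sh))
      = bind_pmf (bernoulli_pmf \<gamma>) (\<lambda>b. bind_pmf (exploit_run B adv es) (\<lambda>sh.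
          if b then map_pmf (\<lambda>k. ((fst sh, False), interleave_list es (snd sh) @ [k])) ?U
          else bind_pmf (alg_sel B (fst sh)) (\<lambda>(s', k). map_pmf (\<lambda>s''. ((s'', False), interleave_list es (snd sh) @ [k]))
            (alg_upd B s' k (adv (interleave_list es (snd sh)) k)))))"
    by (simp add: lift_state_def bandit_step_explore_alg) (rule bind_commute_pmf)
  also have "\<dots> = bind_pmf (bernoulli_pmf \<gamma>) (\<lambda>b. bind_pmf ?U (\<lambda>k.
      map_pmf (lift_state (es @ [(b, k)])) (exploit_run B adv (es @ [(b, k)]))))"
    apply (intro bind_pmf_cong refl)
    subgoal for b
      by (cases b) (simp_all add: explore_step_coupling exploit_step_coupling[symmetric])
    done
  finally show ?thesis
    by (simp add: explore_pmf_def pair_pmf_def bind_assoc_pmf bind_return_pmf)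
qed

lemma bandit_run_explore_alg:
  "bandit_run (explore_alg \<gamma> K B) adv t
   = bind_pmf (replicate_pmf t (explore_pmf \<gamma> K)) (\<lambda>es. map_pmf (lift_state es) (exploit_run B adv es))"
proof (induction t)
  case 0
  show ?case
    by (simp add: explore_alg_def lift_state_def interleave_list_def exploit_run_def n_exploit_list_def
        bind_return_pmf)
next
  case (Suc t)
  then show ?case
    by (simp add: replicate_pmf_Suc_snoc bind_assoc_pmf bind_map_pmf bandit_step_coupling
        del: replicate_pmf.simps)
qed

section \<open>The law of A* as a mixture over exploration sequences\<close>

definition explore_law :: "real \<Rightarrow> nat \<Rightarrow> (nat \<Rightarrow> bool \<times> nat) measure" where
  "explore_law \<gamma> K = (SOME M. law_of M (\<lambda>t. replicate_pmf t (explore_pmf \<gamma> K)))"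

definition exploit_law ::
  "'s bandit_alg \<Rightarrow> (nat list \<Rightarrow> nat \<Rightarrow> real) \<Rightarrow> (nat \<Rightarrow> bool \<times> nat) \<Rightarrow> (nat \<Rightarrow> nat) measure" where
  "exploit_law B adv e = (SOME M. law_of M (\<lambda>t. map_pmf snd (bandit_run B (exploit_adv adv e) t)))"

definition cond_law ::
  "'s bandit_alg \<Rightarrow> (nat list \<Rightarrow> nat \<Rightarrow> real) \<Rightarrow> (nat \<Rightarrow> bool \<times> nat) \<Rightarrow> (nat \<Rightarrow> nat) measure" where
  "cond_law B adv e = distr (exploit_law B adv e) path_space (interleave e)"

definition cond_prefix_pmf ::
  "'s bandit_alg \<Rightarrow> (nat list \<Rightarrow> nat \<Rightarrow> real) \<Rightarrow> (bool \<times> nat) list \<Rightarrow> nat list pmf" where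
  "cond_prefix_pmf B adv es = map_pmf (interleave_list es \<circ> snd) (exploit_run B adv es)"

lemma law_of_explore_law: "law_of (explore_law \<gamma> K) (\<lambda>t. replicate_pmf t (explore_pmf \<gamma> K))"
  unfolding explore_law_def by (rule someI_ex, rule law_of_exists[OF consistent_family_replicate_pmf])

lemma law_of_exploit_law: "law_of (exploit_law B adv e) (\<lambda>t. map_pmf snd (bandit_run B (exploit_adv adv e) t))"
  unfolding exploit_law_def by (rule someI_ex, rule law_of_exists[OF consistent_family_bandit_run])

lemma measurable_interleave: "interleave e \<in> measurable path_space path_space"
proof -
  have "(\<lambda>\<omega>. interleave e \<omega> i) \<in> measurable path_space (count_space UNIV)" for i
    by (cases "fst (e i)") (simp_all add: interleave_def measurable_component_singleton)
  then show ?thesis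
    by (intro measurable_PiM_single') auto
qed

lemma measurable_interleave_exploit_law: "interleave e \<in> measurable (exploit_law B adv e) path_space"
  using measurable_interleave
  by (simp add: law_ofD(2)[OF law_of_exploit_law] cong: measurable_cong_sets)

lemma prob_space_cond_law: "prob_space (cond_law B adv e)"
  unfolding cond_law_def
  by (rule prob_space.prob_space_distr[OF law_ofD(1)[OF law_of_exploit_law] measurable_interleave_exploit_law])

lemma sets_cond_law: "sets (cond_law B adv e) = sets path_space"
  by (simp add: cond_law_def)

lemma bandit_run_exploit_adv_prefix:
  "bandit_run B (exploit_adv adv e) (n_exploit e t) = exploit_run B adv (map e [0..<t])"
  unfolding exploit_run_def n_exploit_list_map
  by (rule bandit_run_cong, rule exploit_adv_cong_seq[where t=t]) (simp_all add: seq_of_list_map)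

lemma distr_cond_law_prefix:
  "distr (cond_law B adv e) (count_space UNIV) (\<lambda>\<omega>. map \<omega> [0..<t]) = measure_pmf (cond_prefix_pmf B adv (map e [0..<t]))"
proof -
  note law = law_of_exploit_law[of B adv e]
  have "distr (cond_law B adv e) (count_space UNIV) (\<lambda>\<omega>. map \<omega> [0..<t])
      = distr (exploit_law B adv e) (count_space UNIV) ((\<lambda>\<omega>. map \<omega> [0..<t]) \<circ> interleave e)"
    unfolding cond_law_def
    by (rule distr_distr[OF measurable_prefix[OF subset_UNIV] measurable_interleave_exploit_law])
  also have "(\<lambda>\<omega>. map \<omega> [0..<t]) \<circ> interleave e = interleave_list (map e [0..<t]) \<circ> (\<lambda>\<omega>. map \<omega> [0..<n_exploit e t])"
    by (auto simp: fun_eq_iff map_interleave)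
  also have "distr (exploit_law B adv e) (count_space UNIV) \<dots>
      = distr (distr (exploit_law B adv e) (count_space UNIV) (\<lambda>\<omega>. map \<omega> [0..<n_exploit e t]))
          (count_space UNIV) (interleave_list (map e [0..<t]))"
    by (rule distr_distr[symmetric, OF _ measurable_prefix_law[OF law]]) simp
  also have "\<dots> = measure_pmf (map_pmf (interleave_list (map e [0..<t]))
      (map_pmf snd (bandit_run B (exploit_adv adv e) (n_exploit e t))))"
    by (simp add: law_ofD(4)[OF law] map_pmf_rep_eq)
  also have "\<dots> = measure_pmf (cond_prefix_pmf B adv (map e [0..<t]))"
    by (simp add: cond_prefix_pmf_def map_pmf_comp comp_def bandit_run_exploit_adv_prefix)
  finally show ?thesis .
qed

lemma prod_algebra_prefix_set:
  assumes "X \<in> prod_algebra UNIV (\<lambda>_::nat. count_space (UNIV::'a set))"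
  shows "\<exists>t S. X = {\<omega>. map \<omega> [0..<t] \<in> S}"
proof -
  obtain J E where X: "X = prod_emb UNIV (\<lambda>_. count_space UNIV) J (Pi\<^sub>E J E)" and "finite J"
    using assms by (force elim!: prod_algebraE)
  then obtain t where "J \<subseteq> {..<t}"
    using finite_nat_bounded by blast
  then have "X = {\<omega>. map \<omega> [0..<t] \<in> {xs. \<forall>j\<in>J. xs ! j \<in> E j}}"
    unfolding X by (auto simp: prod_emb_def PiE_iff subset_iff)
  then show ?thesis by blast
qed

lemma measurable_cond_law: "cond_law B adv \<in> measurable (explore_law \<gamma> K) (prob_algebra path_space)"
proof (rule measurable_prob_algebra_generated[OF sets_PiM Int_stable_prod_algebra prod_algebra_sets_into_space])
  show "\<And>e. prob_space (cond_law B adv e)" "\<And>e. sets (cond_law B adv e) = sets path_space"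
    by (rule prob_space_cond_law, rule sets_cond_law)
next
  fix A assume "A \<in> prod_algebra UNIV (\<lambda>_::nat. count_space (UNIV::nat set))"
  then obtain t S where A: "A = {\<omega>. map \<omega> [0..<t] \<in> S}"
    using prod_algebra_prefix_set by blast
  have "emeasure (cond_law B adv e) A = emeasure (measure_pmf (cond_prefix_pmf B adv (map e [0..<t]))) S" for e
  proof -
    have "(\<lambda>\<omega>. map \<omega> [0..<t]) \<in> measurable (cond_law B adv e) (count_space (UNIV::nat list set))"
      by (subst measurable_cong_sets[OF sets_cond_law refl]) (rule measurable_prefix[OF subset_UNIV])
    then show ?thesis
      unfolding distr_cond_law_prefix[symmetric] A
      by (subst emeasure_distr) (simp_all add: cond_law_def vimage_def)
  qed
  moreover have "(\<lambda>e. emeasure (measure_pmf (cond_prefix_pmf B adv (map e [0..<t]))) S) \<in> borel_measurable (explore_law \<gamma> K)"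
    by (subst measurable_cong_sets[OF law_ofD(2)[OF law_of_explore_law] refl])
       (rule measurable_prefix_comp, simp_all)
  ultimately show "(\<lambda>e. emeasure (cond_law B adv e) A) \<in> borel_measurable (explore_law \<gamma> K)"
    by simp
qed

lemma law_of_explore_alg:
  "law_of (explore_law \<gamma> K \<bind> cond_law B adv) (\<lambda>t. map_pmf snd (bandit_run (explore_alg \<gamma> K B) adv t))"
proof -
  note law = law_of_explore_law[of \<gamma> K]
  have kernel: "cond_law B adv \<in> measurable (explore_law \<gamma> K) (subprob_algebra path_space)"
    by (rule measurable_prob_algebraD[OF measurable_cond_law])
  have ne: "space (explore_law \<gamma> K) \<noteq> {}"
    using law_ofD(3)[OF law] by simp
  have "distr (explore_law \<gamma> K \<bind> cond_law B adv) (count_space UNIV) (\<lambda>\<omega>. map \<omega> [0..<t])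
     = measure_pmf (map_pmf snd (bandit_run (explore_alg \<gamma> K B) adv t))" for t
  proof -
    have "distr (explore_law \<gamma> K \<bind> cond_law B adv) (count_space UNIV) (\<lambda>\<omega>. map \<omega> [0..<t])
        = explore_law \<gamma> K \<bind> (\<lambda>e. measure_pmf (cond_prefix_pmf B adv (map e [0..<t])))"
      by (simp add: distr_bind[OF kernel ne measurable_prefix[OF subset_UNIV]] distr_cond_law_prefix)
    also have "\<dots> = distr (explore_law \<gamma> K) (count_space UNIV) (\<lambda>e. map e [0..<t])
        \<bind> (\<lambda>es. measure_pmf (cond_prefix_pmf B adv es))"
    proof (rule bind_distr[symmetric, OF measurable_prefix_law[OF law] _ ne])
      show "(\<lambda>es. measure_pmf (cond_prefix_pmf B adv es))
          \<in> measurable (count_space UNIV) (subprob_algebra (count_space UNIV))"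
        by (simp add: measure_pmf_in_subprob_algebra)
    qed
    also have "\<dots> = measure_pmf (bind_pmf (replicate_pmf t (explore_pmf \<gamma> K)) (cond_prefix_pmf B adv))"
      by (simp add: law_ofD(4)[OF law] measure_pmf_bind)
    also have "bind_pmf (replicate_pmf t (explore_pmf \<gamma> K)) (cond_prefix_pmf B adv)
        = map_pmf snd (bandit_run (explore_alg \<gamma> K B) adv t)"
      by (simp add: bandit_run_explore_alg map_bind_pmf map_pmf_comp cond_prefix_pmf_def[abs_def]
          lift_state_def comp_def)
    finally show ?thesis .
  qed
  moreover have "prob_space (explore_law \<gamma> K \<bind> cond_law B adv)"
    by (rule prob_space.prob_space_bind[OF law_ofD(1)[OF law] AE_I2[OF prob_space_cond_law] kernel])
  moreover have "sets (explore_law \<gamma> K \<bind> cond_law B adv) = sets path_space"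
    by (rule sets_bind[OF sets_cond_law ne])
  ultimately show ?thesis
    unfolding law_of_def by blast
qed

section \<open>Frequency of exploration\<close>

lemma map_replicate_pmf: "map_pmf (map f) (replicate_pmf n p) = replicate_pmf n (map_pmf f p)"
proof (induction n)
  case 0
  then show ?case by simp
next
  case (Suc n)
  then show ?case
    by (simp add: map_pmf_def bind_assoc_pmf bind_return_pmf flip: Suc.IH[unfolded map_pmf_def])
qed

lemma count_explore_replicate_pmf:
  assumes "\<gamma> \<in> {0..1}"
  shows "map_pmf (\<lambda>es. length (filter fst es)) (replicate_pmf t (explore_pmf \<gamma> K)) = binomial_pmf t \<gamma>"
proof -
  have "map_pmf (\<lambda>es. length (filter fst es)) (replicate_pmf t (explore_pmf \<gamma> K))
      = map_pmf (length \<circ> filter id) (map_pmf (map fst) (replicate_pmf t (explore_pmf \<gamma> K)))"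
    by (simp add: map_pmf_comp filter_map comp_def)
  also have "\<dots> = binomial_pmf t \<gamma>"
    by (simp add: map_replicate_pmf explore_pmf_def map_fst_pair_pmf binomial_pmf_altdef[OF assms])
  finally show ?thesis .
qed

lemma length_filter_fst_map: "length (filter (fst \<circ> e) [0..<t]) = n_explore e t"
  by (induction t) (simp_all add: n_explore_Suc)

lemma prob_n_explore_ge:
  assumes "\<gamma> \<in> {0..1}" "\<delta> > 0"
  shows "measure (explore_law \<gamma> K) {e. map e [0..<t] \<in> {es. (\<gamma> + \<delta>) * real t \<le> real (length (filter fst es))}}
    \<le> exp (-2 * \<delta>\<^sup>2) ^ t"
proof (cases "t = 0")
  case True
  then show ?thesis
    using prob_space.prob_le_1[OF law_ofD(1)[OF law_of_explore_law]] by simp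
next
  case False
  let ?S = "{es. (\<gamma> + \<delta>) * real t \<le> real (length (filter fst es))}"
  have "measure (explore_law \<gamma> K) {e. map e [0..<t] \<in> ?S} = measure_pmf.prob (replicate_pmf t (explore_pmf \<gamma> K)) ?S"
    unfolding measure_def by (simp only: emeasure_prefix_law[OF law_of_explore_law])
  also have "\<dots> = measure_pmf.prob (map_pmf (\<lambda>es. length (filter fst es)) (replicate_pmf t (explore_pmf \<gamma> K)))
          {x. (\<gamma> + \<delta>) * real t \<le> real x}"
    by (simp add: vimage_def)
  also have "\<dots> = measure_pmf.prob (binomial_pmf t \<gamma>) {x. \<gamma> + \<delta> \<le> real x / real t}"
    using False by (simp add: count_explore_replicate_pmf[OF assms(1)] pos_le_divide_eq)
  also have "\<dots> \<le> exp (-2 * real t * \<delta>\<^sup>2)"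
    using binomial_distribution.prob_ge'[of \<gamma> t \<delta>] assms False by (simp add: binomial_distribution_def)
  also have "\<dots> = exp (-2 * \<delta>\<^sup>2) ^ t"
    by (simp add: exp_of_nat_mult[symmetric] mult_ac)
  finally show ?thesis .
qed

lemma AE_eventually_n_explore_less:
  assumes "\<gamma> \<in> {0..1}" "\<delta> > 0"
  shows "AE e in explore_law \<gamma> K. eventually (\<lambda>t. real (n_explore e t) < (\<gamma> + \<delta>) * real t) sequentially"
proof -
  define A where "A t = {e :: nat \<Rightarrow> bool \<times> nat. map e [0..<t] \<in> {es. (\<gamma> + \<delta>) * real t \<le> real (length (filter fst es))}}" for t
  have "summable (\<lambda>t. measure (explore_law \<gamma> K) (A t))"
    using assms prob_n_explore_ge[OF assms]
    by (intro summable_comparison_test[OF _ summable_geometric[of "exp (-2 * \<delta>\<^sup>2)"]]) (auto simp: A_def)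
  moreover have "A t \<in> sets (explore_law \<gamma> K)" for t
    unfolding A_def by (rule sets_prefix_law[OF law_of_explore_law])
  moreover have "emeasure (explore_law \<gamma> K) (A t) < \<infinity>" for t
    using finite_measure.emeasure_finite[OF prob_space.finite_measure[OF law_ofD(1)[OF law_of_explore_law]]] by (simp add: less_top)
  ultimately have "AE e in explore_law \<gamma> K. eventually (\<lambda>t. e \<in> space (explore_law \<gamma> K) - A t) sequentially"
    by (intro borel_cantelli_AE1)
  then show ?thesis
    by (rule AE_mp) (auto simp: A_def length_filter_fst_map elim!: eventually_mono)
qed

lemma AE_explore_law_arms:
  assumes "K \<ge> 1"
  shows "AE e in explore_law \<gamma> K. \<forall>s. snd (e s) < K"
proof -
  have "AE e in explore_law \<gamma> K. (\<lambda>es. snd (es ! s) < K) (map e [0..<Suc s])" for s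
  proof (rule AE_prefix_law[OF law_of_explore_law])
    fix es assume "es \<in> set_pmf (replicate_pmf (Suc s) (explore_pmf \<gamma> K))"
    then have "es \<in> lists (set_pmf (explore_pmf \<gamma> K))" "length es = Suc s"
      unfolding set_replicate_pmf by blast+
    then have "es ! s \<in> set_pmf (explore_pmf \<gamma> K)"
      by (metis in_listsD lessI nth_mem)
    then have "snd (es ! s) \<in> set_pmf (pmf_of_set {..<K})"
      by (auto simp: explore_pmf_def)
    moreover have "{..<K} \<noteq> {}"
      using assms by (simp add: lessThan_empty_iff)
    ultimately show "snd (es ! s) < K"
      by simp
  qed
  then show ?thesis
    by (simp add: AE_all_countable del: upt_Suc)
qed

lemma AE_exploit_law_arms:
  assumes "valid_alg K B"
  shows "AE \<omega> in exploit_law B adv e. \<forall>m. \<omega> m < K"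
proof -
  have "AE \<omega> in exploit_law B adv e. (\<lambda>h. h ! m < K) (map \<omega> [0..<Suc m])" for m
  proof (rule AE_prefix_law[OF law_of_exploit_law])
    fix h assume "h \<in> set_pmf (map_pmf snd (bandit_run B (exploit_adv adv e) (Suc m)))"
    then obtain x where "x \<in> set_pmf (bandit_run B (exploit_adv adv e) (Suc m))" "h = snd x"
      by auto
    then show "h ! m < K"
      using bandit_run_arms[OF assms] length_bandit_run by (metis lessI nth_mem)
  qed
  then show ?thesis
    by (simp add: AE_all_countable del: upt_Suc)
qed

section \<open>Regret of A* along a fixed exploration sequence\<close>

text \<open>Rewards collected at exploiting times are exactly the rewards seen by A, and each
  exploring time adds a reward in [0,1].\<close>

lemma sum_interleave_bounds:
  fixes f g :: "nat \<Rightarrow> real"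
  assumes exploit: "\<And>s. \<not> fst (e s) \<Longrightarrow> f s = g (n_exploit e s)"
    and explore: "\<And>s. fst (e s) \<Longrightarrow> 0 \<le> f s \<and> f s \<le> 1"
  shows "(\<Sum>m<n_exploit e t. g m) \<le> (\<Sum>s<t. f s)"
    and "(\<Sum>s<t. f s) \<le> (\<Sum>m<n_exploit e t. g m) + real (n_explore e t)"
proof -
  have "(\<Sum>m<n_exploit e t. g m) \<le> (\<Sum>s<t. f s) \<and> (\<Sum>s<t. f s) \<le> (\<Sum>m<n_exploit e t. g m) + real (n_explore e t)"
  proof (induction t)
    case 0
    then show ?case by simp
  next
    case (Suc t)
    then show ?case
      using exploit[of t] explore[of t] by (cases "fst (e t)") (auto simp: n_exploit_Suc n_explore_Suc)
  qed
  then show "(\<Sum>m<n_exploit e t. g m) \<le> (\<Sum>s<t. f s)"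
    and "(\<Sum>s<t. f s) \<le> (\<Sum>m<n_exploit e t. g m) + real (n_explore e t)"
    by auto
qed

lemma mult_avg_regret:
  assumes "K \<ge> 1"
  shows "real t * avg_regret K adv ks t
    = Max ((\<lambda>k. \<Sum>s<t. adv (map ks [0..<s]) k) ` {..<K}) - (\<Sum>s<t. adv (map ks [0..<s]) (ks s))"
proof -
  have "{..<K} \<noteq> {}"
    using assms by (simp add: lessThan_empty_iff)
  then show ?thesis
    by (cases "t = 0") (simp_all add: avg_regret_def)
qed

lemma Max_le_Max_add:
  fixes f g :: "'a \<Rightarrow> real"
  assumes "finite A" "A \<noteq> {}" "\<And>k. k \<in> A \<Longrightarrow> f k \<le> g k + c"
  shows "Max (f ` A) \<le> Max (g ` A) + c"
proof -
  have "Max (f ` A) \<in> f ` A"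
    using assms(1,2) by (intro Max_in) auto
  then obtain k where "k \<in> A" "Max (f ` A) = f k"
    by auto
  moreover have "g k \<le> Max (g ` A)"
    using \<open>k \<in> A\<close> assms(1) by (intro Max_ge) auto
  ultimately show ?thesis
    using assms(3) by fastforce
qed

lemma regret_interleave_le:
  assumes "K \<ge> 1" "valid_adv K adv" "\<And>s. snd (e s) < K" "\<And>m. \<omega> m < K"
  shows "real t * avg_regret K adv (interleave e \<omega>) t
    \<le> real (n_exploit e t) * avg_regret K (exploit_adv adv e) \<omega> (n_exploit e t) + real (n_explore e t)"
proof -
  let ?n = "n_exploit e t" and ?ks = "interleave e \<omega>"
  have reward: "0 \<le> adv h k \<and> adv h k \<le> 1" if "k < K" for h k
    using assms(2) that unfolding valid_adv_def by blast
  have arm: "?ks s < K" for s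
    using assms(3,4) by (simp add: interleave_def)
  have at_exploit: "exploit_adv adv e (map \<omega> [0..<n_exploit e s]) = adv (map ?ks [0..<s])" if "\<not> fst (e s)" for s
    using exploit_adv_at_exploit_time[of e s, OF that] .
  have "(\<Sum>s<t. adv (map ?ks [0..<s]) k) \<le> (\<Sum>m<?n. exploit_adv adv e (map \<omega> [0..<m]) k) + real (n_explore e t)"
    if "k < K" for k
    using at_exploit reward[OF that] by (intro sum_interleave_bounds(2)) auto
  then have best_arm: "Max ((\<lambda>k. \<Sum>s<t. adv (map ?ks [0..<s]) k) ` {..<K})
      \<le> Max ((\<lambda>k. \<Sum>m<?n. exploit_adv adv e (map \<omega> [0..<m]) k) ` {..<K}) + real (n_explore e t)"
    using assms(1) by (intro Max_le_Max_add) (auto simp: lessThan_empty_iff)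
  have "adv (map ?ks [0..<s]) (?ks s) = exploit_adv adv e (map \<omega> [0..<n_exploit e s]) (\<omega> (n_exploit e s))"
    if "\<not> fst (e s)" for s
    unfolding at_exploit[OF that] using that by (simp add: interleave_def)
  then have "(\<Sum>m<?n. exploit_adv adv e (map \<omega> [0..<m]) (\<omega> m)) \<le> (\<Sum>s<t. adv (map ?ks [0..<s]) (?ks s))"
    using reward[OF arm] by (intro sum_interleave_bounds(1)) auto
  with best_arm show ?thesis
    unfolding mult_avg_regret[OF assms(1)] by linarith
qed

lemma filterlim_at_top_of_dilution:
  fixes n c :: "nat \<Rightarrow> nat"
  assumes "\<gamma> < 1"
    and frac: "\<And>\<delta>. \<delta> > 0 \<Longrightarrow> eventually (\<lambda>t. real (c t) < (\<gamma> + \<delta>) * real t) sequentially"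
    and split: "\<And>t. n t + c t = t"
  shows "filterlim n at_top sequentially"
  unfolding filterlim_at_top
proof
  fix N :: nat
  define \<eta> where "\<eta> = (1 - \<gamma>) / 2"
  have \<eta>: "\<eta> > 0"
    using assms(1) by (simp add: \<eta>_def)
  obtain T :: nat where "real N / \<eta> \<le> real T"
    using real_arch_simple by blast
  then have "real N \<le> \<eta> * real T"
    using \<eta> by (simp add: pos_divide_le_eq mult.commute)
  then have "real N \<le> \<eta> * real t" if "t \<ge> T" for t
    using that \<eta> by (meson mult_left_mono of_nat_le_iff order_trans less_imp_le)
  then have "eventually (\<lambda>t. real N \<le> \<eta> * real t) sequentially"
    by (auto simp: eventually_sequentially)
  then show "eventually (\<lambda>t. N \<le> n t) sequentially"
    using frac[OF \<eta>]
  proof eventually_elim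
    case (elim t)
    have "(1 - \<gamma> - \<eta>) * real t < real (n t)"
      using elim(2) split[of t] by (simp add: algebra_simps flip: of_nat_add)
    then show "N \<le> n t"
      using elim(1) by (simp add: \<eta>_def field_simps)
  qed
qed

text \<open>Rounds outside the subsequence n t cost at most their fraction gamma in average regret;
  since gamma < 1, n t tends to infinity and the regret a of the subsequence is eventually below
  epsilon + delta.\<close>

lemma limsup_dilution_le:
  fixes r a :: "nat \<Rightarrow> real" and n c :: "nat \<Rightarrow> nat"
  assumes sub: "limsup (\<lambda>m. ereal (a m)) \<le> ereal \<epsilon>" and "\<epsilon> \<ge> 0" "\<gamma> < 1"
    and frac: "\<And>\<delta>. \<delta> > 0 \<Longrightarrow> eventually (\<lambda>t. real (c t) < (\<gamma> + \<delta>) * real t) sequentially"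
    and split: "\<And>t. n t + c t = t"
    and bound: "\<And>t. real t * r t \<le> real (n t) * a (n t) + real (c t)"
  shows "limsup (\<lambda>t. ereal (r t)) \<le> ereal (\<epsilon> + \<gamma>)"
proof (rule ereal_le_epsilon2)
  fix d :: real assume "0 < d"
  define \<delta> where "\<delta> = d / 2"
  have \<delta>: "\<delta> > 0"
    using \<open>0 < d\<close> by (simp add: \<delta>_def)
  have "limsup (\<lambda>m. ereal (a m)) < ereal (\<epsilon> + \<delta>)"
    using sub \<delta> by (simp add: le_less_trans)
  then have "eventually (\<lambda>m. ereal (a m) < ereal (\<epsilon> + \<delta>)) sequentially"
    by (rule Limsup_lessD)
  then have "eventually (\<lambda>m. a m < \<epsilon> + \<delta>) sequentially"
    by simp
  then have "eventually (\<lambda>t. a (n t) < \<epsilon> + \<delta>) sequentially"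
    by (rule eventually_compose_filterlim[OF _ filterlim_at_top_of_dilution[OF assms(3) frac split]])
  then have "eventually (\<lambda>t. real t * r t \<le> real t * (\<epsilon> + \<gamma> + d)) sequentially"
    using frac[OF \<delta>]
  proof eventually_elim
    case (elim t)
    have "real (n t) * a (n t) \<le> real (n t) * (\<epsilon> + \<delta>)"
      using elim(1) by (intro mult_left_mono) auto
    also have "\<dots> \<le> real t * (\<epsilon> + \<delta>)"
      using split[of t] \<open>\<epsilon> \<ge> 0\<close> \<delta> by (intro mult_right_mono) auto
    finally show ?case
      using bound[of t] elim(2) by (simp add: \<delta>_def algebra_simps)
  qed
  then have "eventually (\<lambda>t. ereal (r t) \<le> ereal (\<epsilon> + \<gamma>) + ereal d) sequentially"
    using eventually_gt_at_top[of 0] by eventually_elim simp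
  then show "limsup (\<lambda>t. ereal (r t)) \<le> ereal (\<epsilon> + \<gamma>) + ereal d"
    by (rule Limsup_bounded)
qed

lemma limsup_avg_regret_interleave_le:
  assumes "K \<ge> 1" "valid_adv K adv" "\<And>s. snd (e s) < K" "\<And>m. \<omega> m < K" "\<epsilon> \<ge> 0" "\<gamma> < 1"
    and "limsup (\<lambda>n. ereal (avg_regret K (exploit_adv adv e) \<omega> n)) \<le> ereal \<epsilon>"
    and "\<And>\<delta>. \<delta> > 0 \<Longrightarrow> eventually (\<lambda>t. real (n_explore e t) < (\<gamma> + \<delta>) * real t) sequentially"
  shows "limsup (\<lambda>t. ereal (avg_regret K adv (interleave e \<omega>) t)) \<le> ereal (\<epsilon> + \<gamma>)"
  by (rule limsup_dilution_le[OF assms(7,5,6,8) n_exploit_add_n_explore regret_interleave_le[OF assms(1-4)]])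

section \<open>Hannan consistency of A*\<close>

lemma avg_regret_cong:
  assumes "\<And>s. s < t \<Longrightarrow> x s = y s"
  shows "avg_regret K adv x t = avg_regret K adv y t"
proof -
  have prefix: "map x [0..<s] = map y [0..<s]" if "s < t" for s
    using assms that by simp
  have "(\<Sum>s<t. adv (map x [0..<s]) k) = (\<Sum>s<t. adv (map y [0..<s]) k)" for k
    by (intro sum.cong) (simp_all add: prefix)
  moreover have "(\<Sum>s<t. adv (map x [0..<s]) (x s)) = (\<Sum>s<t. adv (map y [0..<s]) (y s))"
    by (intro sum.cong) (simp_all add: prefix assms)
  ultimately show ?thesis
    by (simp add: avg_regret_def)
qed

lemma measurable_avg_regret: "(\<lambda>x. avg_regret K adv x t) \<in> borel_measurable path_space"
proof -
  have "(\<lambda>x. avg_regret K adv (nth (map x [0..<t])) t) \<in> borel_measurable path_space"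
    by (rule measurable_prefix_comp) simp_all
  moreover have "avg_regret K adv (nth (map x [0..<t])) t = avg_regret K adv x t" for x
    by (rule avg_regret_cong) simp
  ultimately show ?thesis
    by simp
qed

lemma pred_limsup_avg_regret_le: "Measurable.pred path_space (\<lambda>x. limsup (\<lambda>t. ereal (avg_regret K adv x t)) \<le> ereal c)"
  using borel_measurable_limsup[OF borel_measurable_ereal[OF measurable_avg_regret]] by measurable

lemma AE_eventually_n_explore_less_all:
  assumes "\<gamma> \<in> {0..1}"
  shows "AE e in explore_law \<gamma> K. \<forall>\<delta>>0. eventually (\<lambda>t. real (n_explore e t) < (\<gamma> + \<delta>) * real t) sequentially"
proof -
  have "AE e in explore_law \<gamma> K. \<forall>m::nat. eventually (\<lambda>t. real (n_explore e t) < (\<gamma> + 1 / Suc m) * real t) sequentially"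
    unfolding AE_all_countable by (intro allI AE_eventually_n_explore_less[OF assms]) simp
  then show ?thesis
  proof (rule AE_mp, intro AE_I2 impI allI)
    fix e :: "nat \<Rightarrow> bool \<times> nat" and \<delta> :: real
    assume all: "\<forall>m::nat. eventually (\<lambda>t. real (n_explore e t) < (\<gamma> + 1 / Suc m) * real t) sequentially"
      and "\<delta> > 0"
    then obtain m :: nat where m: "1 / Suc m < \<delta>"
      using nat_approx_posE by blast
    show "eventually (\<lambda>t. real (n_explore e t) < (\<gamma> + \<delta>) * real t) sequentially"
      using all[rule_format, of m]
    proof (rule eventually_mono)
      fix t assume "real (n_explore e t) < (\<gamma> + 1 / Suc m) * real t"
      also have "\<dots> \<le> (\<gamma> + \<delta>) * real t"
        using m by (intro mult_right_mono) auto
      finally show "real (n_explore e t) < (\<gamma> + \<delta>) * real t" .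
    qed
  qed
qed

lemma hannan_consistent_mod_alg:
  assumes "0 \<le> \<epsilon>" "0 < \<gamma>" "\<gamma> < 1" "bandit_algorithm A" "hannan_consistent \<epsilon> A"
  shows "hannan_consistent (\<epsilon> + \<gamma>) (mod_alg \<gamma> A)"
  unfolding hannan_consistent_def
proof (intro allI impI)
  fix K adv and M :: "(nat \<Rightarrow> nat) measure"
  assume K: "1 \<le> K" and adv: "valid_adv K adv"
    and "law_of M (\<lambda>t. map_pmf snd (bandit_run (mod_alg \<gamma> A K) adv t))"
  then have M: "M = explore_law \<gamma> K \<bind> cond_law (A K) adv"
    using law_of_unique[OF _ law_of_explore_alg] by (simp add: mod_alg_def)
  have cond: "AE \<omega> in cond_law (A K) adv e. limsup (\<lambda>t. ereal (avg_regret K adv \<omega> t)) \<le> ereal (\<epsilon> + \<gamma>)"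
    if "\<forall>s. snd (e s) < K"
      and "\<forall>\<delta>>0. eventually (\<lambda>t. real (n_explore e t) < (\<gamma> + \<delta>) * real t) sequentially" for e
  proof -
    have "valid_adv K (exploit_adv adv e)"
      using adv by (simp add: valid_adv_def exploit_adv_def)
    then have "AE \<omega> in exploit_law (A K) adv e. limsup (\<lambda>n. ereal (avg_regret K (exploit_adv adv e) \<omega> n)) \<le> ereal \<epsilon>"
      using assms(5) K law_of_exploit_law unfolding hannan_consistent_def by blast
    moreover have "AE \<omega> in exploit_law (A K) adv e. \<forall>m. \<omega> m < K"
      using assms(4) K by (intro AE_exploit_law_arms) (simp add: bandit_algorithm_def)
    ultimately have "AE \<omega> in exploit_law (A K) adv e. limsup (\<lambda>t. ereal (avg_regret K adv (interleave e \<omega>) t)) \<le> ereal (\<epsilon> + \<gamma>)"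
    proof eventually_elim
      case (elim \<omega>)
      then show ?case
        using that K adv assms(1,3) by (intro limsup_avg_regret_interleave_le) auto
    qed
    then show ?thesis
      unfolding cond_law_def
      by (subst AE_distr_iff[OF measurable_interleave_exploit_law]) (use pred_limsup_avg_regret_le[unfolded pred_def] in simp_all)
  qed
  have "AE e in explore_law \<gamma> K. \<forall>\<delta>>0. eventually (\<lambda>t. real (n_explore e t) < (\<gamma> + \<delta>) * real t) sequentially"
    using assms(2,3) by (intro AE_eventually_n_explore_less_all) simp
  with AE_explore_law_arms[OF K]
  show "AE \<omega> in M. limsup (\<lambda>t. ereal (avg_regret K adv \<omega> t)) \<le> ereal (\<epsilon> + \<gamma>)"
    unfolding M AE_bind[OF measurable_prob_algebraD[OF measurable_cond_law] pred_limsup_avg_regret_le]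
    by eventually_elim (rule cond)
qed

section \<open>Guaranteed exploration of A*\<close>

lemma pmf_arm_explore_alg_sel_ge:
  assumes "0 \<le> \<gamma>" "\<gamma> \<le> 1" "i < K"
  shows "\<gamma> / real K \<le> pmf (map_pmf snd (alg_sel (explore_alg \<gamma> K B) s)) i"
proof -
  obtain s0 b where s: "s = (s0, b)"
    by fastforce
  have "map_pmf snd (alg_sel (explore_alg \<gamma> K B) s) =
      bind_pmf (bernoulli_pmf \<gamma>) (\<lambda>e. if e then pmf_of_set {..<K} else map_pmf snd (alg_sel B s0))"
    by (auto simp: explore_alg_def s map_bind_pmf map_pmf_comp split_beta intro!: bind_pmf_cong)
  then have "pmf (map_pmf snd (alg_sel (explore_alg \<gamma> K B) s)) i
      = \<gamma> * pmf (pmf_of_set {..<K}) i + (1 - \<gamma>) * pmf (map_pmf snd (alg_sel B s0)) i"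
    using assms by (simp add: pmf_bind)
  moreover have "pmf (pmf_of_set {..<K}) i = 1 / real K"
    using assms by (auto simp: lessThan_empty_iff)
  ultimately show ?thesis
    using assms by simp
qed

lemma length_game_run: "x \<in> set_pmf (game_run A1 A2 u1 u2 t) \<Longrightarrow> length (snd x) = t"
  by (induction t arbitrary: x) (auto simp: game_step_def split: prod.splits)

lemma set_pmf_game_step: "x \<in> set_pmf (game_step A1 A2 u1 u2 sh) \<Longrightarrow> \<exists>a. snd x = snd sh @ [a]"
  by (auto simp: game_step_def split: prod.splits)

lemma game_step_joint_action:
  "map_pmf (\<lambda>x. snd x ! length (snd sh)) (game_step A1 A2 u1 u2 sh)
   = pair_pmf (map_pmf snd (alg_sel A1 (fst (fst sh)))) (map_pmf snd (alg_sel A2 (snd (fst sh))))"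
  unfolding game_step_def pair_pmf_def
  by (simp add: map_bind_pmf bind_map_pmf map_pmf_comp nth_append split_beta)

lemma emeasure_game_step_miss_le:
  assumes "0 < \<gamma>" "\<gamma> < 1" "i < K1" "j < K2"
  shows "emeasure (measure_pmf (game_step (explore_alg \<gamma> K1 B1) (explore_alg \<gamma> K2 B2) u1 u2 sh))
    {x. snd x ! length (snd sh) \<noteq> (i, j)} \<le> ennreal (1 - \<gamma> / real K1 * (\<gamma> / real K2))"
proof -
  let ?Q = "pair_pmf (map_pmf snd (alg_sel (explore_alg \<gamma> K1 B1) (fst (fst sh))))
    (map_pmf snd (alg_sel (explore_alg \<gamma> K2 B2) (snd (fst sh))))"
  have "\<gamma> / real K1 * (\<gamma> / real K2) \<le> pmf ?Q (i, j)"
    unfolding pmf_pair using assms by (intro mult_mono pmf_arm_explore_alg_sel_ge) auto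
  moreover have "measure_pmf.prob (game_step (explore_alg \<gamma> K1 B1) (explore_alg \<gamma> K2 B2) u1 u2 sh)
      {x. snd x ! length (snd sh) \<noteq> (i, j)} = measure_pmf.prob ?Q (UNIV - {(i, j)})"
    by (subst game_step_joint_action[symmetric]) (simp add: measure_map_pmf vimage_def)
  moreover have "measure_pmf.prob ?Q (UNIV - {(i, j)}) = 1 - pmf ?Q (i, j)"
    using measure_pmf.prob_compl[of "{(i, j)}" ?Q] by (simp add: measure_pmf_single Compl_eq_Diff_UNIV)
  ultimately show ?thesis
    by (simp add: measure_pmf.emeasure_eq_measure ennreal_leI)
qed

definition misses :: "nat \<times> nat \<Rightarrow> nat \<Rightarrow> nat \<Rightarrow> (nat \<times> nat) list set" where
  "misses a n m = {h. \<forall>t\<in>{n..<n + m}. h ! t \<noteq> a}"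

lemma snoc_in_misses_Suc:
  assumes "length h = n + m"
  shows "h @ [b] \<in> misses a n (Suc m) \<longleftrightarrow> h \<in> misses a n m \<and> b \<noteq> a"
proof -
  have "{n..<n + Suc m} = insert (n + m) {n..<n + m}"
    by auto
  then show ?thesis
    using assms by (auto simp: misses_def nth_append)
qed

lemma emeasure_game_step_misses_le:
  assumes miss: "emeasure (measure_pmf (game_step A1 A2 u1 u2 sh)) {x. snd x ! length (snd sh) \<noteq> a}
      \<le> ennreal (1 - p)"
    and len: "length (snd sh) = n + m"
  shows "emeasure (measure_pmf (game_step A1 A2 u1 u2 sh)) {x. snd x \<in> misses a n (Suc m)}
    \<le> ennreal (1 - p) * indicator {sh. snd sh \<in> misses a n m} sh"
proof -
  let ?S = "if snd sh \<in> misses a n m then {x. snd x ! length (snd sh) \<noteq> a} else {}"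
  have "x \<in> ?S" if x: "x \<in> {x. snd x \<in> misses a n (Suc m)} \<inter> set_pmf (game_step A1 A2 u1 u2 sh)" for x
  proof -
    obtain b where "snd x = snd sh @ [b]"
      using set_pmf_game_step x by blast
    then show ?thesis
      using x len by (simp add: snoc_in_misses_Suc nth_append)
  qed
  then have "{x. snd x \<in> misses a n (Suc m)} \<inter> set_pmf (game_step A1 A2 u1 u2 sh) \<subseteq> ?S"
    by blast
  then have "emeasure (measure_pmf (game_step A1 A2 u1 u2 sh)) {x. snd x \<in> misses a n (Suc m)}
      \<le> emeasure (measure_pmf (game_step A1 A2 u1 u2 sh)) ?S"
    by (subst emeasure_Int_set_pmf[symmetric]) (rule emeasure_mono, simp_all)
  then show ?thesis
    using miss by (simp add: indicator_def split: if_splits)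
qed

lemma emeasure_game_run_misses_le:
  assumes "p \<le> 1"
    and miss: "\<And>sh. emeasure (measure_pmf (game_step A1 A2 u1 u2 sh)) {x. snd x ! length (snd sh) \<noteq> a}
      \<le> ennreal (1 - p)"
  shows "emeasure (measure_pmf (game_run A1 A2 u1 u2 (n + m))) {x. snd x \<in> misses a n m} \<le> ennreal ((1 - p) ^ m)"
proof (induction m)
  case 0
  then show ?case by (simp add: measure_pmf.emeasure_le_1)
next
  case (Suc m)
  let ?R = "game_run A1 A2 u1 u2 (n + m)"
  have "emeasure (measure_pmf (game_run A1 A2 u1 u2 (n + Suc m))) {x. snd x \<in> misses a n (Suc m)}
      = (\<integral>\<^sup>+x. emeasure (measure_pmf (game_step A1 A2 u1 u2 x)) {x'. snd x' \<in> misses a n (Suc m)} \<partial>measure_pmf ?R)"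
    by simp
  also have "\<dots> \<le> (\<integral>\<^sup>+x. ennreal (1 - p) * indicator {x. snd x \<in> misses a n m} x \<partial>measure_pmf ?R)"
    using emeasure_game_step_misses_le[OF miss length_game_run]
    by (intro nn_integral_mono_AE) (simp add: AE_measure_pmf_iff)
  also have "\<dots> = ennreal (1 - p) * emeasure (measure_pmf ?R) {x. snd x \<in> misses a n m}"
    by (simp add: nn_integral_cmult_indicator)
  also have "\<dots> \<le> ennreal (1 - p) * ennreal ((1 - p) ^ m)"
    by (intro mult_left_mono Suc.IH) simp
  also have "\<dots> = ennreal ((1 - p) ^ Suc m)"
    using assms(1) by (simp add: ennreal_mult[symmetric])
  finally show ?case .
qed

lemma AE_game_infinitely_often:
  assumes "0 < p" "p \<le> 1"
    and miss: "\<And>sh. emeasure (measure_pmf (game_step A1 A2 u1 u2 sh)) {x. snd x ! length (snd sh) \<noteq> a}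
      \<le> ennreal (1 - p)"
    and law: "law_of M (\<lambda>t. map_pmf snd (game_run A1 A2 u1 u2 t))"
  shows "AE \<omega> in M. infinite {t. \<omega> t = a}"
proof -
  have fin: "finite_measure M"
    using law_ofD(1)[OF law] by (rule prob_space.finite_measure)
  have "AE \<omega> in M. \<exists>t\<ge>n. \<omega> t = a" for n
  proof (rule AE_I')
    let ?B = "\<Inter>m. {\<omega>. map \<omega> [0..<n + m] \<in> misses a n m}"
    have sets: "?B \<in> sets M"
      using sets_prefix_law[OF law] by auto
    have "measure M ?B \<le> (1 - p) ^ m" for m
    proof -
      have "emeasure M ?B \<le> emeasure M {\<omega>. map \<omega> [0..<n + m] \<in> misses a n m}"
        by (rule emeasure_mono) (auto intro: sets_prefix_law[OF law])
      also have "\<dots> \<le> ennreal ((1 - p) ^ m)"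
        using emeasure_game_run_misses_le[OF assms(2) miss, of n m]
        by (simp add: emeasure_prefix_law[OF law] vimage_def)
      finally show ?thesis
        using assms(1,2) finite_measure.emeasure_eq_measure[OF fin] by simp
    qed
    moreover have "(\<lambda>m. (1 - p) ^ m) \<longlonglongrightarrow> 0"
      using assms(1,2) by (intro LIMSEQ_power_zero) auto
    ultimately have "measure M ?B \<le> 0"
      by (intro LIMSEQ_le_const) auto
    then show "?B \<in> null_sets M"
      using sets finite_measure.emeasure_eq_measure[OF fin]
      by (simp add: null_sets_def measure_le_0_iff)
    show "{\<omega> \<in> space M. \<not> (\<exists>t\<ge>n. \<omega> t = a)} \<subseteq> ?B"
      by (auto simp: misses_def)
  qed
  then have "AE \<omega> in M. \<forall>n. \<exists>t\<ge>n. \<omega> t = a"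
    by (simp add: AE_all_countable)
  then show ?thesis
    by (simp add: infinite_nat_iff_unbounded_le)
qed

lemma guaranteed_exploration_mod_alg:
  assumes "0 < \<gamma>" "\<gamma> < 1"
  shows "guaranteed_exploration (mod_alg \<gamma> A)"
  unfolding guaranteed_exploration_def
proof (intro allI impI)
  fix K1 K2 u1 u2 and M :: "(nat \<Rightarrow> nat \<times> nat) measure"
  assume "1 \<le> K1" "1 \<le> K2"
    and law: "law_of M (\<lambda>t. map_pmf snd (game_run (mod_alg \<gamma> A K1) (mod_alg \<gamma> A K2) u1 u2 t))"
  have inf: "AE \<omega> in M. infinite {t. \<omega> t = (i, j)}" if "i < K1" "j < K2" for i j
  proof (rule AE_game_infinitely_often[OF _ _ _ law[unfolded mod_alg_def]])
    show "0 < \<gamma> / real K1 * (\<gamma> / real K2)"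
      using assms that by simp
    show "\<gamma> / real K1 * (\<gamma> / real K2) \<le> 1"
      using assms that by (intro mult_le_one) auto
  qed (rule emeasure_game_step_miss_le[OF assms that])
  have "AE \<omega> in M. i < K1 \<longrightarrow> j < K2 \<longrightarrow> infinite {t. \<omega> t = (i, j)}" for i j
    using inf[of i j] by (cases "i < K1 \<and> j < K2") auto
  then show "AE \<omega> in M. \<forall>i<K1. \<forall>j<K2. infinite {t. \<omega> t = (i, j)}"
    by (simp add: AE_all_countable)
qed

lemma bandit_algorithm_mod_alg: "bandit_algorithm A \<Longrightarrow> bandit_algorithm (mod_alg \<gamma> A)"
  unfolding bandit_algorithm_def valid_alg_def mod_alg_def explore_alg_def
  by (fastforce split: prod.splits if_splits simp: lessThan_empty_iff)

theorem lemma2: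
  fixes \<epsilon> \<gamma> :: real and A :: "nat \<Rightarrow> 's bandit_alg"
  assumes "0 \<le> \<epsilon>" and "0 < \<gamma>" and "\<gamma> < 1"
    and "bandit_algorithm A" and "hannan_consistent \<epsilon> A"
  shows "bandit_algorithm (mod_alg \<gamma> A)
         \<and> hannan_consistent (\<epsilon> + \<gamma>) (mod_alg \<gamma> A)
         \<and> guaranteed_exploration (mod_alg \<gamma> A)"
  using bandit_algorithm_mod_alg[OF assms(4)] hannan_consistent_mod_alg[OF assms]
    guaranteed_exploration_mod_alg[OF assms(2,3)] by blast

end
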